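(* Let $G$ be a finite non-abelian group satisfying condition (Con), let $L$ be the Laplacian matrix of $\mathcal C_G$, and let $r$ be the number of connected components of the induced subgraph of $\mathcal C_G$ on $G\setminus Z(G)$. Then $|Z(G)|$ is an eigenvalue of $L$ with multiplicity at least $r-1$.
   Context: For a finite group $G$, the commuting graph $\mathcal C_G$ is the simple undirected graph with vertex set $G$ in which distinct $u,v\in G$ are adjacent iff $uv=vu$. The Laplacian matrix of a simple graph is $L=D-A$ ($A$ adjacency matrix, $D$ diagonal degree matrix). $Z(G)$ is the center of $G$ and $C(v)=\{w\in G: wv=vw\}$ the centralizer of $v$. Condition (Con): for all $u,v\in G\setminus Z(G)$, either $C(u)=C(v)$ or $C(u)\cap C(v)=Z(G)$. *)

theory Defs
  imports "HOL-Algebra.Group" "Jordan_Normal_Form.Char_Poly"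
begin

definition centralizer :: "('a, 'b) monoid_scheme \<Rightarrow> 'a \<Rightarrow> 'a set" where
  "centralizer G v = {w \<in> carrier G. w \<otimes>\<^bsub>G\<^esub> v = v \<otimes>\<^bsub>G\<^esub> w}"

definition center :: "('a, 'b) monoid_scheme \<Rightarrow> 'a set" where
  "center G = {z \<in> carrier G. \<forall>g \<in> carrier G. z \<otimes>\<^bsub>G\<^esub> g = g \<otimes>\<^bsub>G\<^esub> z}"

definition con_condition :: "('a, 'b) monoid_scheme \<Rightarrow> bool" where
  "con_condition G \<longleftrightarrow>
     (\<forall>u \<in> carrier G - center G. \<forall>v \<in> carrier G - center G.
        centralizer G u = centralizer G v \<or> centralizer G u \<inter> centralizer G v = center G)"

definition comm_adj :: "('a, 'b) monoid_scheme \<Rightarrow> 'a \<Rightarrow> 'a \<Rightarrow> bool" where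
  "comm_adj G u v \<longleftrightarrow> u \<in> carrier G \<and> v \<in> carrier G \<and> u \<noteq> v \<and> u \<otimes>\<^bsub>G\<^esub> v = v \<otimes>\<^bsub>G\<^esub> u"

definition comm_degree :: "('a, 'b) monoid_scheme \<Rightarrow> 'a \<Rightarrow> nat" where
  "comm_degree G u = card {w. comm_adj G u w}"

definition comm_laplacian :: "('a, 'b) monoid_scheme \<Rightarrow> (nat \<Rightarrow> 'a) \<Rightarrow> real mat" where
  "comm_laplacian G e = mat (card (carrier G)) (card (carrier G))
     (\<lambda>(i, j). if i = j then real (comm_degree G (e i))
               else if comm_adj G (e i) (e j) then -1 else 0)"

definition induced_components :: "('a, 'b) monoid_scheme \<Rightarrow> 'a set \<Rightarrow> 'a set set" where
  "induced_components G S =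
     S // (({(u, v). u \<in> S \<and> v \<in> S \<and> comm_adj G u v})\<^sup>* \<inter> S \<times> S)"

end

theory Submission
  imports Defs
begin

(*
  Under (Con), commuting is an equivalence relation on G - Z(G): two commuting
  noncentral elements have equal centralizers.  Its classes are the components of the
  induced subgraph, and the centralizer of a noncentral x is Z(G) together with the class
  of x.  Hence every function vanishing on Z(G), constant on the classes and of total sum
  zero is an eigenvector of L for |Z(G)|.  Fixing one class X0, the functions
  |X| 1_X0 - |X0| 1_X for the r - 1 other classes X are linearly independent, and the
  geometric multiplicity of an eigenvalue is at most its algebraic multiplicity.
*)

interpretation const_poly_hom: comm_ring_hom "\<lambda>a :: 'a :: comm_ring_1. [:a:]"
  by unfold_locales (auto simp: one_pCons)

lemma card_le_order_char_poly:
  fixes A P :: "'a :: field mat"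
  assumes A: "A \<in> carrier_mat n n" and P: "P \<in> carrier_mat n n" and "det P \<noteq> 0"
    and U: "U \<subseteq> {0..<n}"
    and eigen: "\<And>j. j \<in> U \<Longrightarrow> A *\<^sub>v col P j = c \<cdot>\<^sub>v col P j"
  shows "card U \<le> order c (char_poly A)"
proof -
  define M where "M = char_poly_matrix A"
  define P' where "P' = map_mat (\<lambda>a. [:a:]) P"
  define D :: "'a poly mat"
    where "D = mat n n (\<lambda>(i, j). if i = j then if j \<in> U then [:-c, 1:] else 1 else 0)"
  define B where "B = mat n n (\<lambda>(i, j). if j \<in> U then P' $$ (i, j) else (M * P') $$ (i, j))"
  have M: "M \<in> carrier_mat n n" and P': "P' \<in> carrier_mat n n"
    and B: "B \<in> carrier_mat n n" and D: "D \<in> carrier_mat n n"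
    using A P by (auto simp: M_def P'_def B_def D_def)
  have MP'_col: "(M * P') $$ (i, j) = [:-c, 1:] * P' $$ (i, j)" if "i < n" "j \<in> U" for i j
  proof -
    have j: "j < n" using that U by auto
    have AP: "(\<Sum>k = 0..<n. A $$ (i, k) * P $$ (k, j)) = c * P $$ (i, j)"
      using arg_cong[OF eigen[OF \<open>j \<in> U\<close>], of "\<lambda>v. v $ i"] that j A P
      by (simp add: mult_mat_vec_def scalar_prod_def)
    have "(M * P') $$ (i, j) = (\<Sum>k = 0..<n. M $$ (i, k) * P' $$ (k, j))"
      using M P' that j by (simp add: scalar_prod_def)
    also have "\<dots> = (\<Sum>k = 0..<n. (if k = i then [:0, 1:] * [:P $$ (k, j):] else 0)
                       - [:A $$ (i, k) * P $$ (k, j):])"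
      using A P that j
      by (intro sum.cong) (auto simp: M_def P'_def char_poly_matrix_def algebra_simps)
    also have "\<dots> = [:0, 1:] * [:P $$ (i, j):] - [:c * P $$ (i, j):]"
      using that by (simp add: sum_subtractf sum_to_poly AP)
    finally show ?thesis
      using P that j by (simp add: P'_def algebra_simps)
  qed
  \<comment> \<open>The columns in U of \<open>M * P'\<close> all carry the factor \<open>[:-c, 1:]\<close>, which D pulls out.\<close>
  have "M * P' = B * D"
  proof (rule eq_matI)
    fix i j assume "i < dim_row (B * D)" "j < dim_col (B * D)"
    hence i: "i < n" and j: "j < n" using B D by auto
    have "(B * D) $$ (i, j) = (\<Sum>k = 0..<n. B $$ (i, k) * D $$ (k, j))"
      using B D i j by (simp add: scalar_prod_def)
    also have "\<dots> = B $$ (i, j) * D $$ (j, j)"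
      using j by (subst sum.remove[of _ j]) (auto simp: D_def)
    finally show "(M * P') $$ (i, j) = (B * D) $$ (i, j)"
      using i j by (auto simp: B_def D_def MP'_col)
  qed (use M P' B D in auto)
  moreover have "det D = [:-c, 1:] ^ card U"
  proof -
    have "det D = (\<Prod>j = 0..<n. D $$ (j, j))"
      using D by (subst det_upper_triangular) (auto simp: D_def upper_triangular_def prod_list_diag_prod)
    also have "\<dots> = (\<Prod>j = 0..<n. if j \<in> U then [:-c, 1:] else 1)"
      by (rule prod.cong) (auto simp: D_def)
    finally show ?thesis
      using U by (simp add: prod.If_cases Int_absorb1)
  qed
  ultimately have "Polynomial.smult (det P) (char_poly A) = det B * [:-c, 1:] ^ card U"
    using det_mult[OF M P'] det_mult[OF B D] by (simp add: M_def P'_def char_poly_def)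
  hence "[:-c, 1:] ^ card U dvd char_poly A"
    using \<open>det P \<noteq> 0\<close> by (metis dvd_smult_iff dvd_triv_right)
  moreover have "char_poly A \<noteq> 0"
    using degree_monic_char_poly[OF A] by auto
  ultimately show ?thesis
    by (rule order_max)
qed

lemma quotient_class_eq:
  assumes "equiv A r" "X \<in> A // r" "x \<in> X"
  shows "r `` {x} = X"
proof -
  obtain a where "X = r `` {a}"
    using assms(2) by (rule quotientE)
  with assms show ?thesis
    using equiv_class_eq[OF assms(1)] by simp
qed

lemma quotient_mem_iff:
  assumes "equiv A r" "X \<in> A // r" "(x, y) \<in> r"
  shows "y \<in> X \<longleftrightarrow> x \<in> X"
proof -
  have "x \<in> r `` {y}" "y \<in> r `` {x}"
    using assms(1,3) by (auto elim: equivE symE)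
  with quotient_class_eq[OF assms(1,2)] show ?thesis
    by blast
qed

definition class_difference :: "'a set \<Rightarrow> 'a set \<Rightarrow> 'a \<Rightarrow> real" where
  "class_difference X0 X y = real (card X) * of_bool (y \<in> X0) - real (card X0) * of_bool (y \<in> X)"

lemma sum_class_difference:
  assumes "finite V" "X0 \<subseteq> V" "X \<subseteq> V"
  shows "(\<Sum>y \<in> V. class_difference X0 X y) = 0"
  using assms by (simp add: class_difference_def sum_subtractf sum_distrib_left[symmetric]
                            of_bool_def sum.If_cases Int_absorb1)

definition last_index :: "(nat \<Rightarrow> 'a) \<Rightarrow> nat \<Rightarrow> 'a set \<Rightarrow> nat" where
  "last_index e n X = Max {i. i < n \<and> e i \<in> X}"

lemma le_last_index: "i < n \<Longrightarrow> e i \<in> X \<Longrightarrow> i \<le> last_index e n X"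
  unfolding last_index_def by (rule Max_ge) auto

lemma last_index:
  assumes "X \<subseteq> e ` {0..<n}" "X \<noteq> {}"
  shows "last_index e n X < n" "e (last_index e n X) \<in> X"
proof -
  have "{i. i < n \<and> e i \<in> X} \<noteq> {}"
    using assms by force
  hence "last_index e n X \<in> {i. i < n \<and> e i \<in> X}"
    unfolding last_index_def by (intro Max_in) auto
  thus "last_index e n X < n" "e (last_index e n X) \<in> X"
    by auto
qed

lemma quotient_difference_columns:
  fixes e :: "nat \<Rightarrow> 'a" and R :: "'a rel"
  assumes R: "equiv S R" and S: "S \<subseteq> e ` {0..<n}" "S \<noteq> {}"
  obtains X0 U P where "X0 \<in> S // R" "U \<subseteq> {0..<n}" "card U = card (S // R) - 1"
    "P \<in> carrier_mat n n" "det P \<noteq> 0"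
    "\<And>j. j \<in> U \<Longrightarrow> \<exists>X \<in> S // R. col P j = vec n (\<lambda>i. class_difference X0 X (e i))"
proof -
  let ?C = "S // R" and ?last = "last_index e n"
  have "finite S"
    using S(1) by (rule finite_subset) simp
  hence fin: "finite ?C"
    using R by (intro finite_quotient) (auto elim: equivE)
  have classes: "X \<subseteq> e ` {0..<n}" "X \<noteq> {}" "finite X" if "X \<in> ?C" for X
    using that S(1) \<open>finite S\<close> R in_quotient_imp_subset[OF R] in_quotient_imp_non_empty[OF R]
    by (auto intro: finite_subset)
  \<comment> \<open>Indexing each class other than X0 by its last index, with X0 the class whose last
    index is smallest, makes the matrix of difference columns upper triangular.\<close>
  obtain X0 where X0: "X0 \<in> ?C" and X0_min: "\<And>X. X \<in> ?C \<Longrightarrow> ?last X0 \<le> ?last X"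
    using ex_has_least_nat[of "\<lambda>X. X \<in> ?C" _ ?last] S(2) by (metis ex_in_conv quotient_is_empty)
  have class_last: "R `` {e (?last X)} = X" if "X \<in> ?C" for X
    using quotient_class_eq[OF R that last_index(2)[OF classes(1,2)[OF that]]] .
  define U where "U = ?last ` (?C - {X0})"
  have "inj_on ?last (?C - {X0})"
    using class_last by (metis DiffD1 inj_onI)
  hence "card U = card ?C - 1"
    using X0 fin by (simp add: U_def card_image card_Diff_singleton)
  have U: "\<exists>X \<in> ?C - {X0}. j = ?last X \<and> R `` {e j} = X" if "j \<in> U" for j
    using that class_last by (auto simp: U_def)
  have U_sub: "U \<subseteq> {0..<n}"
    using last_index(1)[OF classes(1,2)] by (auto simp: U_def)
  define P where "P = mat n n (\<lambda>(i, j). if j \<in> U then class_difference X0 (R `` {e j}) (e i)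
                                        else of_bool (i = j))"
  have P: "P \<in> carrier_mat n n"
    by (simp add: P_def)
  have "upper_triangular P"
  proof (rule upper_triangularI)
    fix i j assume ji: "j < i" and i: "i < dim_row P"
    show "P $$ (i, j) = 0"
    proof (cases "j \<in> U")
      case True
      then obtain X where X: "X \<in> ?C" "j = ?last X" "R `` {e j} = X"
        using U by blast
      have "e i \<notin> X" "e i \<notin> X0"
        using le_last_index[of i n e] X0_min[OF X(1)] X(2) ji i P by fastforce+
      thus ?thesis
        using True X(3) ji i P by (simp add: P_def class_difference_def)
    qed (use ji i P in \<open>simp add: P_def\<close>)
  qed
  moreover have "P $$ (j, j) \<noteq> 0" if "j < n" for j
  proof (cases "j \<in> U")
    case True
    then obtain X where X: "X \<in> ?C - {X0}" "j = ?last X" "R `` {e j} = X"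
      using U by blast
    have "e j \<in> X"
      using X last_index(2)[OF classes(1,2)] by blast
    moreover have "X \<inter> X0 = {}"
      using X X0 quotient_disj[OF R] by blast
    ultimately show ?thesis
      using True that X classes[OF X0] by (auto simp: P_def class_difference_def)
  qed (use that in \<open>simp add: P_def\<close>)
  ultimately have "det P \<noteq> 0"
    using P by (simp add: det_upper_triangular prod_list_diag_prod)
  moreover have "\<exists>X \<in> ?C. col P j = vec n (\<lambda>i. class_difference X0 X (e i))" if "j \<in> U" for j
    using that U[OF that] U_sub by (auto intro!: bexI[of _ "R `` {e j}"] simp: P_def)
  ultimately show ?thesis
    using that[OF X0 U_sub \<open>card U = card ?C - 1\<close> P] by blast
qed

definition noncentral_commute :: "('a, 'b) monoid_scheme \<Rightarrow> 'a rel" where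
  "noncentral_commute G = {(u, v). u \<in> carrier G - center G \<and> v \<in> carrier G - center G
                                 \<and> u \<otimes>\<^bsub>G\<^esub> v = v \<otimes>\<^bsub>G\<^esub> u}"

lemma con_condition_centralizer_eq:
  assumes "con_condition G" "(u, v) \<in> noncentral_commute G"
  shows "centralizer G u = centralizer G v"
proof -
  have "u \<in> centralizer G u \<inter> centralizer G v" "u \<notin> center G"
    using assms(2) by (auto simp: noncentral_commute_def centralizer_def)
  thus ?thesis
    using assms unfolding con_condition_def noncentral_commute_def by blast
qed

lemma equiv_noncentral_commute:
  assumes "con_condition G"
  shows "equiv (carrier G - center G) (noncentral_commute G)"
proof (rule equivI)
  show "noncentral_commute G \<subseteq> (carrier G - center G) \<times> (carrier G - center G)"
    by (auto simp: noncentral_commute_def)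
  show "refl_on (carrier G - center G) (noncentral_commute G)"
    by (auto simp: refl_on_def noncentral_commute_def)
  show "sym (noncentral_commute G)"
    by (auto simp: sym_def noncentral_commute_def)
  show "trans (noncentral_commute G)"
  proof (rule transI)
    fix u v w assume uv: "(u, v) \<in> noncentral_commute G" and vw: "(v, w) \<in> noncentral_commute G"
    have "centralizer G u = centralizer G w"
      using con_condition_centralizer_eq[OF assms uv] con_condition_centralizer_eq[OF assms vw] by simp
    thus "(u, w) \<in> noncentral_commute G"
      using uv vw by (auto simp: noncentral_commute_def centralizer_def)
  qed
qed

lemma induced_components_noncentral:
  assumes "con_condition G"
  shows "induced_components G (carrier G - center G)
           = (carrier G - center G) // noncentral_commute G"
proof -
  define S where "S = carrier G - center G"
  define E where "E = {(u, v). u \<in> S \<and> v \<in> S \<and> comm_adj G u v}"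
  have E: "E \<subseteq> noncentral_commute G"
    by (auto simp: E_def S_def comm_adj_def noncentral_commute_def)
  have "E\<^sup>* \<subseteq> (noncentral_commute G)\<^sup>="
    using rtrancl_mono[OF E] equiv_noncentral_commute[OF assms]
    by (metis equiv_def rtrancl_trancl_reflcl trancl_id)
  hence "E\<^sup>* \<inter> S \<times> S \<subseteq> noncentral_commute G"
    by (auto simp: S_def noncentral_commute_def)
  moreover have "noncentral_commute G \<subseteq> E\<^sup>* \<inter> S \<times> S"
    by (auto simp: E_def S_def comm_adj_def noncentral_commute_def)
  ultimately have "E\<^sup>* \<inter> S \<times> S = noncentral_commute G"
    by (rule subset_antisym)
  thus ?thesis
    by (simp add: induced_components_def E_def S_def)
qed

lemma centralizer_noncentral:
  assumes "(x, x) \<in> noncentral_commute G"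
  shows "centralizer G x = center G \<union> noncentral_commute G `` {x}"
  using assms by (auto simp: centralizer_def center_def noncentral_commute_def)

lemma noncommuting_pair:
  assumes "group G" "\<not> comm_group G"
  obtains a b where "a \<in> carrier G - center G" "b \<in> carrier G - center G"
    "(a, b) \<notin> noncentral_commute G"
proof -
  obtain a b where ab: "a \<in> carrier G" "b \<in> carrier G" "a \<otimes>\<^bsub>G\<^esub> b \<noteq> b \<otimes>\<^bsub>G\<^esub> a"
    using group.group_comm_groupI[OF assms(1)] assms(2) by blast
  moreover have "a \<notin> center G"
    using ab by (auto simp: center_def)
  moreover have "b \<notin> center G"
    using ab by (auto simp: center_def intro!: bexI[of _ a])
  ultimately show ?thesis
    using that
    by (auto simp: noncentral_commute_def)
qed

lemma card_quotient_noncentral_ge_2: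
  assumes "group G" "finite (carrier G)" "\<not> comm_group G" "con_condition G"
  shows "card ((carrier G - center G) // noncentral_commute G) \<ge> 2"
proof -
  let ?R = "noncentral_commute G"
  obtain a b where a: "a \<in> carrier G - center G" and b: "b \<in> carrier G - center G"
    and ab: "(a, b) \<notin> ?R"
    using noncommuting_pair[OF assms(1,3)] .
  have "?R `` {a} \<noteq> ?R `` {b}"
    using ab a b equiv_class_eq_iff[OF equiv_noncentral_commute[OF assms(4)]] by blast
  hence "card {?R `` {a}, ?R `` {b}} = 2"
    by simp
  moreover have "{?R `` {a}, ?R `` {b}} \<subseteq> (carrier G - center G) // ?R"
    using a b by (auto intro: quotientI)
  moreover have "finite ((carrier G - center G) // ?R)"
    using assms(2) by (intro finite_quotient) (auto simp: noncentral_commute_def)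
  ultimately show ?thesis
    by (metis card_mono)
qed

lemma comm_degree_eq_card_centralizer:
  assumes "x \<in> carrier G"
  shows "comm_degree G x = card (centralizer G x - {x})"
proof -
  have "{w. comm_adj G x w} = centralizer G x - {x}"
    using assms by (auto simp: comm_adj_def centralizer_def)
  thus ?thesis
    by (simp add: comm_degree_def)
qed

lemma comm_laplacian_mult_vec_index:
  assumes fin: "finite (carrier G)" and e: "bij_betw e {0..<card (carrier G)} (carrier G)"
    and i: "i < card (carrier G)"
  shows "(comm_laplacian G e *\<^sub>v vec (card (carrier G)) (\<lambda>k. f (e k))) $ i
           = (\<Sum>y \<in> centralizer G (e i) - {e i}. f (e i) - f y)"
proof -
  define n where "n = card (carrier G)"
  define x where "x = e i"
  have x: "x \<in> carrier G"
    using e i by (auto simp: x_def bij_betw_def)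
  have "(comm_laplacian G e *\<^sub>v vec n (\<lambda>k. f (e k))) $ i
          = (\<Sum>k = 0..<n. (if k = i then real (comm_degree G x) * f x else 0)
                           - (if comm_adj G x (e k) then f (e k) else 0))"
    using i by (auto simp: n_def x_def comm_laplacian_def comm_adj_def scalar_prod_def intro!: sum.cong)
  also have "\<dots> = real (comm_degree G x) * f x - (\<Sum>y \<in> carrier G. if comm_adj G x y then f y else 0)"
    using i sum.reindex_bij_betw[OF e, of "\<lambda>y. if comm_adj G x y then f y else 0"]
    by (simp add: sum_subtractf n_def)
  also have "(\<Sum>y \<in> carrier G. if comm_adj G x y then f y else 0) = (\<Sum>y \<in> centralizer G x - {x}. f y)"
    using fin x by (intro sum.mono_neutral_cong_right) (auto simp: comm_adj_def centralizer_def)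
  finally show ?thesis
    using fin x by (simp add: n_def x_def sum_subtractf comm_degree_eq_card_centralizer)
qed

lemma comm_laplacian_eigenvector:
  assumes fin: "finite (carrier G)" and e: "bij_betw e {0..<card (carrier G)} (carrier G)"
    and center: "\<And>z. z \<in> center G \<Longrightarrow> f z = 0"
    and classes: "\<And>x y. (x, y) \<in> noncentral_commute G \<Longrightarrow> f y = f x"
    and sum_zero: "(\<Sum>y \<in> carrier G. f y) = 0"
  shows "comm_laplacian G e *\<^sub>v vec (card (carrier G)) (\<lambda>k. f (e k))
           = real (card (center G)) \<cdot>\<^sub>v vec (card (carrier G)) (\<lambda>k. f (e k))"
proof (rule eq_vecI)
  fix i assume "i < dim_vec (real (card (center G)) \<cdot>\<^sub>v vec (card (carrier G)) (\<lambda>k. f (e k)))"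
  hence i: "i < card (carrier G)" by simp
  define x where "x = e i"
  have x: "x \<in> carrier G"
    using e i by (auto simp: x_def bij_betw_def)
  have "(\<Sum>y \<in> centralizer G x - {x}. f x - f y) = real (card (center G)) * f x"
  proof (cases "x \<in> center G")
    case True
    hence "centralizer G x = carrier G"
      by (auto simp: centralizer_def center_def)
    thus ?thesis
      using True fin x center sum_zero by (simp add: sum_subtractf sum_diff1 sum_negf)
  next
    case False
    hence xx: "(x, x) \<in> noncentral_commute G"
      using x by (simp add: noncentral_commute_def)
    have Z: "finite (center G)" "x \<notin> center G"
      using fin False by (auto simp: center_def)
    have "centralizer G x - {x} = center G \<union> (noncentral_commute G `` {x} - {x})"
      using centralizer_noncentral[OF xx] Z by auto
    moreover have "finite (noncentral_commute G `` {x})"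
      using fin by (rule finite_subset[rotated]) (auto simp: noncentral_commute_def)
    moreover have "center G \<inter> (noncentral_commute G `` {x} - {x}) = {}"
      by (auto simp: noncentral_commute_def)
    moreover have "(\<Sum>y \<in> noncentral_commute G `` {x} - {x}. f x - f y) = 0"
      using classes by (intro sum.neutral) auto
    ultimately show ?thesis
      using Z center by (simp add: sum.union_disjoint)
  qed
  thus "(comm_laplacian G e *\<^sub>v vec (card (carrier G)) (\<lambda>k. f (e k))) $ i
          = (real (card (center G)) \<cdot>\<^sub>v vec (card (carrier G)) (\<lambda>k. f (e k))) $ i"
    using comm_laplacian_mult_vec_index[OF fin e i] i by (simp add: x_def)
qed (simp add: comm_laplacian_def)

lemma comm_laplacian_class_difference:
  assumes fin: "finite (carrier G)" and e: "bij_betw e {0..<card (carrier G)} (carrier G)"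
    and con: "con_condition G"
    and X: "X0 \<in> (carrier G - center G) // noncentral_commute G"
           "X \<in> (carrier G - center G) // noncentral_commute G"
  shows "comm_laplacian G e *\<^sub>v vec (card (carrier G)) (\<lambda>k. class_difference X0 X (e k))
           = real (card (center G)) \<cdot>\<^sub>v vec (card (carrier G)) (\<lambda>k. class_difference X0 X (e k))"
proof (rule comm_laplacian_eigenvector[OF fin e])
  note R = equiv_noncentral_commute[OF con]
  have sub: "X0 \<subseteq> carrier G - center G" "X \<subseteq> carrier G - center G"
    using in_quotient_imp_subset[OF R] X by auto
  show "class_difference X0 X z = 0" if "z \<in> center G" for z
    using that sub by (auto simp: class_difference_def)
  show "class_difference X0 X y = class_difference X0 X x" if "(x, y) \<in> noncentral_commute G" for x y
    using quotient_mem_iff[OF R X(1) that] quotient_mem_iff[OF R X(2) that]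
    by (simp add: class_difference_def)
  show "(\<Sum>y \<in> carrier G. class_difference X0 X y) = 0"
    using fin sub by (intro sum_class_difference) auto
qed

theorem proposition2p8:
  fixes G :: "('a, 'b) monoid_scheme" and e :: "nat \<Rightarrow> 'a" and r :: nat
  assumes "group G"
    and "finite (carrier G)"
    and "\<not> comm_group G"
    and "con_condition G"
    and "bij_betw e {0..<card (carrier G)} (carrier G)"
    and "r = card (induced_components G (carrier G - center G))"
  shows "eigenvalue (comm_laplacian G e) (real (card (center G)))
       \<and> Polynomial.order (real (card (center G))) (char_poly (comm_laplacian G e)) \<ge> r - 1"
proof -
  let ?S = "carrier G - center G" and ?R = "noncentral_commute G" and ?n = "card (carrier G)"
  let ?L = "comm_laplacian G e" and ?z = "real (card (center G))"
  have r: "r = card (?S // ?R)" and r_ge_2: "card (?S // ?R) \<ge> 2"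
    using assms(6) induced_components_noncentral[OF assms(4)]
      card_quotient_noncentral_ge_2[OF assms(1-4)] by simp_all
  have "?S \<subseteq> e ` {0..<?n}"
    using assms(5) by (auto simp: bij_betw_def)
  moreover have "?S \<noteq> {}"
    using r_ge_2 by (intro notI) simp
  ultimately obtain X0 U P where "X0 \<in> ?S // ?R" "U \<subseteq> {0..<?n}" "card U = r - 1"
      "P \<in> carrier_mat ?n ?n" "det P \<noteq> 0"
      and columns: "\<And>j. j \<in> U \<Longrightarrow> \<exists>X \<in> ?S // ?R. col P j = vec ?n (\<lambda>i. class_difference X0 X (e i))"
    using quotient_difference_columns[OF equiv_noncentral_commute[OF assms(4)]] r by metis
  moreover have L: "?L \<in> carrier_mat ?n ?n"
    by (simp add: comm_laplacian_def)
  moreover have "?L *\<^sub>v col P j = ?z \<cdot>\<^sub>v col P j" if "j \<in> U" for j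
    using columns[OF that] comm_laplacian_class_difference[OF assms(2,5,4) \<open>X0 \<in> ?S // ?R\<close>] by auto
  ultimately have order: "r - 1 \<le> order ?z (char_poly ?L)"
    by (metis card_le_order_char_poly)
  hence "order ?z (char_poly ?L) \<noteq> 0"
    using r r_ge_2 by linarith
  hence "eigenvalue ?L ?z"
    by (simp add: order_root eigenvalue_root_char_poly[OF L])
  with order show ?thesis
    by simp
qed

end
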